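(* Let $A,B\in\Omega_n$, with eigenvalues (listed with algebraic multiplicity) $\lambda_1,\dots,\lambda_n$ of $A$ and $\mu_1,\dots,\mu_n$ of $B$. Then $$l_{\mathbb G_n}(\sigma(A),\sigma(B))\le l_{\Omega_n}(A,B)\le \min_{\pi}\max_{1\le j\le n} m(\lambda_j,\mu_{\pi(j)}),$$ where the minimum is over all permutations $\pi$ of $\{1,\dots,n\}$.
   Context: $\mathcal M_n$ is the space of complex $n\times n$ matrices, $r(A)$ the spectral radius, $\Omega_n=\{A\in\mathcal M_n: r(A)<1\}$ the spectral ball, $\mathbb D$ the open unit disc. $\sigma=(\sigma_1,\dots,\sigma_n)$ where $\sigma_j(A)$ is the $j$-th elementary symmetric function of the eigenvalues of $A$ (so $\det(tI-A)=t^n+\sum_j(-1)^j\sigma_j(A)t^{n-j}$); $\mathbb G_n=\sigma(\Omega_n)\subset\mathbb C^n$ is the symmetrized $n$-disc. $m(a,b)=\left|\frac{a-b}{1-a\bar b}\right|$ for $a,b\in\mathbb D$. For a domain $D\subset\mathbb C^k$, $l_D(z,w)=\inf\{|\alpha|:\exists\varphi\in\mathcal O(\mathbb D,D),\ \varphi(0)=z,\ \varphi(\alpha)=w\}$ is the Lempert function. *)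

theory Defs
  imports "HOL-Analysis.Analysis" "Jordan_Normal_Form.Spectral_Radius"
begin

definition spectral_ball :: "nat \<Rightarrow> complex mat set" where
  "spectral_ball n = {A \<in> carrier_mat n n. spectral_radius A < 1}"

text \<open>j-th elementary symmetric function of the eigenvalues, via
  det(tI - A) = t^n + sum_j (-1)^j sigma_j(A) t^(n-j).\<close>
definition sigma_j :: "nat \<Rightarrow> complex mat \<Rightarrow> complex" where
  "sigma_j j A = (-1) ^ j * coeff (char_poly A) (dim_row A - j)"

definition sigma_map :: "complex mat \<Rightarrow> complex vec" where
  "sigma_map A = vec (dim_row A) (\<lambda>k. sigma_j (Suc k) A)"

definition symmetrized_polydisc :: "nat \<Rightarrow> complex vec set" where
  "symmetrized_polydisc n = sigma_map ` spectral_ball n"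

definition moebius_dist :: "complex \<Rightarrow> complex \<Rightarrow> real" where
  "moebius_dist a b = cmod ((a - b) / (1 - a * cnj b))"

definition holo_vec :: "nat \<Rightarrow> (complex \<Rightarrow> complex vec) \<Rightarrow> complex set \<Rightarrow> bool" where
  "holo_vec n \<phi> S \<longleftrightarrow> (\<forall>k<n. (\<lambda>z. vec_index (\<phi> z) k) holomorphic_on S)"

definition holo_mat :: "nat \<Rightarrow> (complex \<Rightarrow> complex mat) \<Rightarrow> complex set \<Rightarrow> bool" where
  "holo_mat n \<phi> S \<longleftrightarrow> (\<forall>i<n. \<forall>j<n. (\<lambda>z. \<phi> z $$ (i, j)) holomorphic_on S)"

definition lempert_vec :: "nat \<Rightarrow> complex vec set \<Rightarrow> complex vec \<Rightarrow> complex vec \<Rightarrow> real" where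
  "lempert_vec n D z w = Inf {cmod \<alpha> | \<alpha>. \<exists>\<phi>. holo_vec n \<phi> (ball 0 1) \<and>
      (\<forall>\<zeta>\<in>ball 0 1. \<phi> \<zeta> \<in> D) \<and> \<phi> 0 = z \<and> \<alpha> \<in> ball 0 1 \<and> \<phi> \<alpha> = w}"

definition lempert_mat :: "nat \<Rightarrow> complex mat set \<Rightarrow> complex mat \<Rightarrow> complex mat \<Rightarrow> real" where
  "lempert_mat n D z w = Inf {cmod \<alpha> | \<alpha>. \<exists>\<phi>. holo_mat n \<phi> (ball 0 1) \<and>
      (\<forall>\<zeta>\<in>ball 0 1. \<phi> \<zeta> \<in> D) \<and> \<phi> 0 = z \<and> \<alpha> \<in> ball 0 1 \<and> \<phi> \<alpha> = w}"

end

(* The components of \<sigma> are, up to sign, coefficients of the characteristic polynomial, hence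
   polynomials in the matrix entries; so \<sigma> maps analytic discs in \<Omega>_n to analytic discs in G_n and the
   first inequality follows. For the second, fix a matching \<pi> of the eigenvalues and some
   t > max_j m(\<lambda>_j, \<mu>_\<pi>(j)). Triangularize A and B by Schur with the matched eigenvalues on the
   diagonals, interpolate each diagonal entry by a self-map of the disc sending 0 to \<lambda>_j and t to
   \<mu>_\<pi>(j), the strictly upper parts linearly, and conjugate by an entire path of invertible matrices
   joining the two triangularizing matrices. The result is an analytic disc in \<Omega>_n through A at 0 and
   B at t, as all its eigenvalues stay in the unit disc. *)

theory Submission
  imports Defs "HOL-Complex_Analysis.Riemann_Mapping"
begin

lemma holomorphic_on_If_const:
  "(b \<Longrightarrow> f holomorphic_on S) \<Longrightarrow> (\<not> b \<Longrightarrow> g holomorphic_on S) \<Longrightarrow>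
    (\<lambda>z. if b then f z else g z) holomorphic_on S"
  by (cases b) auto

text \<open>Unlike \<open>holo_mat\<close>, this includes the dimension of the values, which makes it closed under
  matrix products.\<close>
definition mat_holomorphic_on :: "nat \<Rightarrow> (complex \<Rightarrow> complex mat) \<Rightarrow> complex set \<Rightarrow> bool" where
  "mat_holomorphic_on n F S \<longleftrightarrow> (\<forall>z\<in>S. F z \<in> carrier_mat n n) \<and>
     (\<forall>i<n. \<forall>j<n. (\<lambda>z. F z $$ (i,j)) holomorphic_on S)"

lemma holo_mat_iff_mat_holomorphic_on:
  "(\<And>z. z \<in> S \<Longrightarrow> F z \<in> carrier_mat n n) \<Longrightarrow> holo_mat n F S \<longleftrightarrow> mat_holomorphic_on n F S"
  by (auto simp: holo_mat_def mat_holomorphic_on_def)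

lemma mat_holomorphic_onD:
  assumes "mat_holomorphic_on n F S"
  shows "z \<in> S \<Longrightarrow> F z \<in> carrier_mat n n"
    and "i < n \<Longrightarrow> j < n \<Longrightarrow> (\<lambda>z. F z $$ (i,j)) holomorphic_on S"
  using assms by (auto simp: mat_holomorphic_on_def)

lemma mat_holomorphic_on_dim:
  assumes "mat_holomorphic_on n F S" "z \<in> S"
  shows "dim_row (F z) = n" "dim_col (F z) = n"
  using mat_holomorphic_onD(1)[OF assms] by auto

lemma mat_holomorphic_on_subset:
  "mat_holomorphic_on n F T \<Longrightarrow> S \<subseteq> T \<Longrightarrow> mat_holomorphic_on n F S"
  unfolding mat_holomorphic_on_def using holomorphic_on_subset by blast

lemma mat_holomorphic_on_const: "A \<in> carrier_mat n n \<Longrightarrow> mat_holomorphic_on n (\<lambda>z. A) S"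
  by (auto simp: mat_holomorphic_on_def)

lemma mat_holomorphic_on_mat:
  assumes "\<And>i j. i < n \<Longrightarrow> j < n \<Longrightarrow> (\<lambda>z. f z i j) holomorphic_on S"
  shows "mat_holomorphic_on n (\<lambda>z. mat n n (\<lambda>(i,j). f z i j)) S"
  using assms by (auto simp: mat_holomorphic_on_def)

lemma mat_holomorphic_on_mult:
  assumes F: "mat_holomorphic_on n F S" and G: "mat_holomorphic_on n G S"
  shows "mat_holomorphic_on n (\<lambda>z. F z * G z) S"
  unfolding mat_holomorphic_on_def
proof (intro conjI ballI allI impI)
  fix z assume "z \<in> S"
  then show "F z * G z \<in> carrier_mat n n"
    using mat_holomorphic_onD(1)[OF F] mat_holomorphic_onD(1)[OF G] by (meson mult_carrier_mat)
next
  fix i j assume ij: "i < n" "j < n"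
  have "(\<lambda>z. \<Sum>k<n. F z $$ (i,k) * G z $$ (k,j)) holomorphic_on S"
    using mat_holomorphic_onD(2)[OF F] mat_holomorphic_onD(2)[OF G] ij
    by (intro holomorphic_intros) auto
  then show "(\<lambda>z. (F z * G z) $$ (i, j)) holomorphic_on S"
    by (rule holomorphic_transform)
      (use ij in \<open>auto simp: scalar_prod_def atLeast0LessThan
        mat_holomorphic_on_dim[OF F] mat_holomorphic_on_dim[OF G]\<close>)
qed

lemma mat_holomorphic_on_smult:
  assumes F: "mat_holomorphic_on n F S" and g: "g holomorphic_on S"
  shows "mat_holomorphic_on n (\<lambda>z. g z \<cdot>\<^sub>m F z) S"
  unfolding mat_holomorphic_on_def
proof (intro conjI ballI allI impI)
  fix z assume "z \<in> S"
  then show "g z \<cdot>\<^sub>m F z \<in> carrier_mat n n" using mat_holomorphic_onD(1)[OF F] by auto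
next
  fix i j assume ij: "i < n" "j < n"
  have "(\<lambda>z. g z * F z $$ (i,j)) holomorphic_on S"
    using mat_holomorphic_onD(2)[OF F ij] g by (intro holomorphic_intros)
  then show "(\<lambda>z. (g z \<cdot>\<^sub>m F z) $$ (i, j)) holomorphic_on S"
    by (rule holomorphic_transform) (use ij in \<open>auto simp: mat_holomorphic_on_dim[OF F]\<close>)
qed

lemma mat_holomorphic_on_mat_delete:
  assumes F: "mat_holomorphic_on n F S" and "i < n" "j < n"
  shows "mat_holomorphic_on (n - 1) (\<lambda>z. mat_delete (F z) i j) S"
  unfolding mat_holomorphic_on_def
proof (intro conjI ballI allI impI)
  fix z assume "z \<in> S"
  then show "mat_delete (F z) i j \<in> carrier_mat (n - 1) (n - 1)"
    using mat_delete_carrier mat_holomorphic_onD(1)[OF F] by blast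
next
  fix a b assume ab: "a < n - 1" "b < n - 1"
  have "(\<lambda>z. F z $$ (if a < i then a else Suc a, if b < j then b else Suc b)) holomorphic_on S"
    using mat_holomorphic_onD(2)[OF F] ab by auto
  then show "(\<lambda>z. mat_delete (F z) i j $$ (a, b)) holomorphic_on S"
    by (rule holomorphic_transform)
      (use ab in \<open>auto simp: mat_delete_def mat_holomorphic_on_dim[OF F]\<close>)
qed

lemma holomorphic_on_det:
  assumes F: "mat_holomorphic_on n F S"
  shows "(\<lambda>z. det (F z)) holomorphic_on S"
proof -
  have "(\<lambda>z. \<Sum>p | p permutes {0..<n}. signof p * (\<Prod>i=0..<n. F z $$ (i, p i))) holomorphic_on S"
  proof (intro holomorphic_intros)
    fix p i assume "p \<in> {p. p permutes {0..<n}}" "i \<in> {0..<n}"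
    then show "(\<lambda>z. F z $$ (i, p i)) holomorphic_on S"
      using mat_holomorphic_onD(2)[OF F] permutes_in_image by fastforce
  qed
  then show ?thesis
    by (rule holomorphic_transform) (use mat_holomorphic_onD(1)[OF F] in \<open>auto simp: det_def\<close>)
qed

lemma mat_holomorphic_on_adj_mat:
  assumes F: "mat_holomorphic_on n F S"
  shows "mat_holomorphic_on n (\<lambda>z. adj_mat (F z)) S"
  unfolding mat_holomorphic_on_def
proof (intro conjI ballI allI impI)
  fix z assume "z \<in> S"
  then show "adj_mat (F z) \<in> carrier_mat n n"
    by (auto simp: adj_mat_def mat_holomorphic_on_dim[OF F])
next
  fix i j assume ij: "i < n" "j < n"
  have "(\<lambda>z. (-1)^(j+i) * det (mat_delete (F z) j i)) holomorphic_on S"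
    using holomorphic_on_det[OF mat_holomorphic_on_mat_delete[OF F ij(2,1)]]
    by (intro holomorphic_intros)
  then show "(\<lambda>z. adj_mat (F z) $$ (i, j)) holomorphic_on S"
    by (rule holomorphic_transform)
      (use ij in \<open>auto simp: adj_mat_def cofactor_def mat_holomorphic_on_dim[OF F]\<close>)
qed

lemma adj_mat_div_det_inverse:
  fixes A :: "complex mat"
  assumes A: "A \<in> carrier_mat n n" and "det A \<noteq> 0"
  shows "A * ((1 / det A) \<cdot>\<^sub>m adj_mat A) = 1\<^sub>m n"
    and "(1 / det A) \<cdot>\<^sub>m adj_mat A * A = 1\<^sub>m n"
proof -
  have "(1 / det A) \<cdot>\<^sub>m (det A \<cdot>\<^sub>m 1\<^sub>m n) = 1\<^sub>m n"
    using \<open>det A \<noteq> 0\<close> by (intro eq_matI) auto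
  then show "A * ((1 / det A) \<cdot>\<^sub>m adj_mat A) = 1\<^sub>m n"
      and "(1 / det A) \<cdot>\<^sub>m adj_mat A * A = 1\<^sub>m n"
    using adj_mat[OF A] mult_smult_distrib[OF A adj_mat(1)[OF A]]
      mult_smult_assoc_mat[OF adj_mat(1)[OF A] A] by simp_all
qed

lemma mat_holomorphic_on_inverse:
  assumes F: "mat_holomorphic_on n F S" and "\<And>z. z \<in> S \<Longrightarrow> det (F z) \<noteq> 0"
  shows "mat_holomorphic_on n (\<lambda>z. (1 / det (F z)) \<cdot>\<^sub>m adj_mat (F z)) S"
  using assms(2) holomorphic_on_det[OF F]
  by (intro mat_holomorphic_on_smult mat_holomorphic_on_adj_mat F holomorphic_intros)

lemma mat_inverse_unique:
  fixes A B C :: "complex mat"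
  assumes "A \<in> carrier_mat n n" "B \<in> carrier_mat n n" "C \<in> carrier_mat n n"
    and "B * A = 1\<^sub>m n" "A * C = 1\<^sub>m n"
  shows "B = C"
proof -
  have "B = B * (A * C)" using right_mult_one_mat[OF assms(2)] assms(5) by simp
  also have "\<dots> = (B * A) * C" using assms(1-3) by (simp add: assoc_mult_mat)
  finally show ?thesis using left_mult_one_mat[OF assms(3)] assms(4) by simp
qed

definition poly_holomorphic_on :: "(complex \<Rightarrow> complex poly) \<Rightarrow> complex set \<Rightarrow> bool" where
  "poly_holomorphic_on F S \<longleftrightarrow> (\<forall>k. (\<lambda>z. coeff (F z) k) holomorphic_on S)"

lemma poly_holomorphic_on_transform:
  "poly_holomorphic_on F S \<Longrightarrow> (\<And>z. z \<in> S \<Longrightarrow> F z = G z) \<Longrightarrow> poly_holomorphic_on G S"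
  unfolding poly_holomorphic_on_def by (simp cong: holomorphic_cong)

lemma poly_holomorphic_on_const: "poly_holomorphic_on (\<lambda>z. p) S"
  by (simp add: poly_holomorphic_on_def)

lemma poly_holomorphic_on_const_poly:
  "f holomorphic_on S \<Longrightarrow> poly_holomorphic_on (\<lambda>z. [:f z:]) S"
  unfolding poly_holomorphic_on_def
proof
  fix k assume "f holomorphic_on S"
  then show "(\<lambda>z. coeff [:f z:] k) holomorphic_on S"
    by (cases k) (auto intro: holomorphic_intros)
qed

lemma poly_holomorphic_on_add:
  "poly_holomorphic_on F S \<Longrightarrow> poly_holomorphic_on G S \<Longrightarrow> poly_holomorphic_on (\<lambda>z. F z + G z) S"
  by (auto simp: poly_holomorphic_on_def intro!: holomorphic_intros)

lemma poly_holomorphic_on_mult: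
  "poly_holomorphic_on F S \<Longrightarrow> poly_holomorphic_on G S \<Longrightarrow> poly_holomorphic_on (\<lambda>z. F z * G z) S"
  unfolding poly_holomorphic_on_def coeff_mult by (auto intro!: holomorphic_intros)

lemma poly_holomorphic_on_sum:
  "(\<And>a. a \<in> I \<Longrightarrow> poly_holomorphic_on (F a) S) \<Longrightarrow> poly_holomorphic_on (\<lambda>z. \<Sum>a\<in>I. F a z) S"
  by (induction I rule: infinite_finite_induct)
    (auto intro: poly_holomorphic_on_add poly_holomorphic_on_const)

lemma poly_holomorphic_on_prod:
  "(\<And>a. a \<in> I \<Longrightarrow> poly_holomorphic_on (F a) S) \<Longrightarrow> poly_holomorphic_on (\<lambda>z. \<Prod>a\<in>I. F a z) S"
  by (induction I rule: infinite_finite_induct)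
    (auto intro: poly_holomorphic_on_mult poly_holomorphic_on_const)

lemma poly_holomorphic_on_det:
  assumes "\<And>z. z \<in> S \<Longrightarrow> F z \<in> carrier_mat n n"
    and "\<And>i j. i < n \<Longrightarrow> j < n \<Longrightarrow> poly_holomorphic_on (\<lambda>z. F z $$ (i,j)) S"
  shows "poly_holomorphic_on (\<lambda>z. det (F z)) S"
proof -
  have "poly_holomorphic_on
      (\<lambda>z. \<Sum>p | p permutes {0..<n}. signof p * (\<Prod>i=0..<n. F z $$ (i, p i))) S"
    using assms(2) permutes_in_image
    by (fastforce intro!: poly_holomorphic_on_sum poly_holomorphic_on_mult
        poly_holomorphic_on_const poly_holomorphic_on_prod)
  then show ?thesis
    by (rule poly_holomorphic_on_transform) (simp add: det_def'[OF assms(1)])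
qed

lemma holomorphic_on_char_poly_coeff:
  assumes F: "mat_holomorphic_on n F S"
  shows "(\<lambda>z. coeff (char_poly (F z)) k) holomorphic_on S"
proof -
  have entry: "poly_holomorphic_on (\<lambda>z. char_poly_matrix (F z) $$ (i, j)) S"
    if ij: "i < n" "j < n" for i j
  proof -
    have "poly_holomorphic_on (\<lambda>z. (if i = j then [:0,1:] else 0) + [:- F z $$ (i,j):]) S"
      using mat_holomorphic_onD(2)[OF F ij]
      by (intro poly_holomorphic_on_add poly_holomorphic_on_const poly_holomorphic_on_const_poly
          holomorphic_intros)
    then show ?thesis
      by (rule poly_holomorphic_on_transform)
        (use ij in \<open>simp add: char_poly_matrix_def mat_holomorphic_on_dim[OF F]\<close>)
  qed
  have "poly_holomorphic_on (\<lambda>z. det (char_poly_matrix (F z))) S"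
    using mat_holomorphic_onD(1)[OF F] entry by (intro poly_holomorphic_on_det[where n = n]) auto
  then show ?thesis by (simp add: poly_holomorphic_on_def char_poly_def)
qed

lemma holo_vec_sigma_map:
  assumes F: "mat_holomorphic_on n F S"
  shows "holo_vec n (\<lambda>z. sigma_map (F z)) S"
  unfolding holo_vec_def
proof (intro allI impI)
  fix k assume "k < n"
  have "(\<lambda>z. (-1) ^ Suc k * coeff (char_poly (F z)) (n - Suc k)) holomorphic_on S"
    by (intro holomorphic_intros holomorphic_on_char_poly_coeff[OF F])
  then show "(\<lambda>z. sigma_map (F z) $ k) holomorphic_on S"
    using \<open>k < n\<close> by (simp add: sigma_map_def sigma_j_def mat_holomorphic_on_dim[OF F]
        cong: holomorphic_cong)
qed

lemma det_nonzero_if_right_inverse: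
  fixes A B :: "complex mat"
  assumes "A \<in> carrier_mat n n" "B \<in> carrier_mat n n" "A * B = 1\<^sub>m n"
  shows "det A \<noteq> 0"
  using det_mult[OF assms(1,2)] assms(3) by auto

lemma schur_decomposition_diag:
  fixes A :: "complex mat"
  assumes A: "A \<in> carrier_mat n n" and cp: "char_poly A = (\<Prod>j<n. [:- lam j, 1:])"
  obtains T P Q where "similar_mat_wit A T P Q" "upper_triangular T" "\<And>i. i < n \<Longrightarrow> T $$ (i,i) = lam i"
proof -
  have "(\<Prod>j<n. [:- lam j, 1:]) = (\<Prod>a\<leftarrow>map lam [0..<n]. [:- a, 1:])"
    by (induction n) (auto simp: mult.commute)
  with cp obtain T P Q where "schur_decomposition A (map lam [0..<n]) = (T,P,Q)"
    and "char_poly A = (\<Prod>a\<leftarrow>map lam [0..<n]. [:- a, 1:])"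
    by (cases "schur_decomposition A (map lam [0..<n])") auto
  from schur_decomposition[OF A this(2,1)]
  have sim: "similar_mat_wit A T P Q" and "upper_triangular T" and diag: "diag_mat T = map lam [0..<n]"
    by auto
  moreover have "T $$ (i,i) = lam i" if "i < n" for i
  proof -
    have "dim_row T = n" using similar_mat_witD2(5)[OF A sim] by auto
    then show ?thesis using arg_cong[OF diag, of "\<lambda>xs. xs ! i"] that by (simp add: diag_mat_def)
  qed
  ultimately show ?thesis using that by blast
qed

lemma spectrum_char_poly_linear_factors:
  fixes A :: "complex mat"
  assumes "A \<in> carrier_mat n n" and "char_poly A = (\<Prod>a\<leftarrow>xs. [:- a, 1:])"
  shows "spectrum A = set xs"
proof -
  have "spectrum A = {k. poly (\<Prod>a\<leftarrow>xs. [:- a, 1:]) k = 0}"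
    using spectrum_root_char_poly[OF assms(1)] assms(2) by simp
  also have "\<dots> = set xs"
    by (induction xs) auto
  finally show ?thesis .
qed

lemma spectral_radius_less_1_if_eigenvalues_in_disc:
  fixes A :: "complex mat"
  assumes "A \<in> carrier_mat n n" "0 < n" and "char_poly A = (\<Prod>a\<leftarrow>xs. [:- a, 1:])"
    and "\<And>x. x \<in> set xs \<Longrightarrow> norm x < 1"
  shows "spectral_radius A < 1"
  using spectral_radius_mem_max(1)[OF assms(1,2)] spectrum_char_poly_linear_factors[OF assms(1,3)]
    assms(4) by auto

lemma spectral_ball_eigenvalue_in_disc:
  assumes A: "A \<in> spectral_ball n" and cp: "char_poly A = (\<Prod>j<n. [:- lam j, 1:])" and "j < n"
  shows "norm (lam j) < 1"
proof -
  have Ac: "A \<in> carrier_mat n n" using A by (simp add: spectral_ball_def)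
  have "poly (char_poly A) (lam j) = 0"
    unfolding cp poly_prod using \<open>j < n\<close> by (intro prod_zero) auto
  then have "lam j \<in> spectrum A" using spectrum_root_char_poly[OF Ac] by auto
  then have "norm (lam j) \<le> spectral_radius A"
    using spectral_radius_mem_max(2)[OF Ac] \<open>j < n\<close> by auto
  with A show ?thesis by (simp add: spectral_ball_def)
qed

lemma moebius_dist_less_1: "norm a < 1 \<Longrightarrow> norm b < 1 \<Longrightarrow> moebius_dist a b < 1"
  using Moebius_function_norm_lt_1[of b a 0]
  by (simp add: moebius_dist_def Moebius_function_def mult.commute)

text \<open>If \<open>M\<close> is the disc automorphism sending \<open>l\<close> to \<open>0\<close> and \<open>w = M m\<close>, then \<open>|w| = m(l,m) < t\<close>, so
  \<open>z \<mapsto> M\<^sup>-\<^sup>1 (z w / t)\<close> does the job.\<close>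
lemma unit_disc_self_map_through:
  assumes l: "norm l < 1" and m: "norm m < 1" and d: "moebius_dist l m < t" and "t < 1"
  shows "\<exists>f. f holomorphic_on ball 0 1 \<and> (\<forall>z\<in>ball 0 1. norm (f z) < 1) \<and> f 0 = l \<and> f (of_real t) = m"
proof -
  define w where "w = Moebius_function 0 l m"
  have "norm (1 - cnj l * m) = norm (1 - l * cnj m)"
    by (metis complex_cnj_cnj complex_cnj_diff complex_cnj_mult complex_cnj_one complex_mod_cnj)
  then have nw: "norm w = moebius_dist l m"
    by (simp add: w_def Moebius_function_def moebius_dist_def norm_divide norm_minus_commute)
  then have t: "0 < t" using d norm_ge_zero[of w] by linarith
  define c where "c = w / of_real t"
  have c: "norm c < 1" using nw d t by (simp add: c_def norm_divide)
  have scale: "norm (z * c) < 1" if "z \<in> ball 0 1" for z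
    using that c mult_strict_mono'[of "norm z" 1 "norm c" 1] by (simp add: norm_mult)
  define f where "f z = Moebius_function 0 (-l) (z * c)" for z
  have "f holomorphic_on ball 0 1"
    unfolding f_def using l scale
    by (intro holomorphic_on_compose_gen[of "\<lambda>z. z * c" _ "Moebius_function 0 (-l)" "ball 0 1", unfolded o_def]
        holomorphic_intros Moebius_function_holomorphic) auto
  moreover have "\<forall>z\<in>ball 0 1. norm (f z) < 1"
    using scale l Moebius_function_norm_lt_1 by (simp add: f_def)
  moreover have "f 0 = l" by (simp add: f_def Moebius_function_def)
  moreover have "f (of_real t) = m"
    using t Moebius_function_compose[of "-l" l m] l m by (simp add: f_def c_def w_def)
  ultimately show ?thesis by blast
qed

text \<open>Triangularize \<open>M = U R V\<close> and deform \<open>R\<close> inside the invertible upper triangular matrices,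
  moving each diagonal entry along \<open>exp (z / t \<cdot> Ln R\<^sub>i\<^sub>i)\<close>.\<close>
lemma invertible_mat_entire_path:
  fixes M :: "complex mat" and t :: complex
  assumes M: "M \<in> carrier_mat n n" and "det M \<noteq> 0" and "t \<noteq> 0"
  obtains E where "mat_holomorphic_on n E UNIV" "\<And>z. det (E z) \<noteq> 0" "E 0 = 1\<^sub>m n" "E t = M"
proof -
  obtain as where "char_poly M = (\<Prod>a\<leftarrow>as. [:- a, 1:])"
    using char_poly_factorized[OF M] by blast
  moreover obtain R U V where "schur_decomposition M as = (R,U,V)"
    by (cases "schur_decomposition M as") auto
  ultimately have sim: "similar_mat_wit M R U V" and ut: "upper_triangular R"
    using schur_decomposition[OF M] by blast+
  note UV = similar_mat_witD2[OF M sim]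
  have "det M = det U * det R * det V"
    using UV by (simp add: det_mult)
  then have "det R \<noteq> 0" using \<open>det M \<noteq> 0\<close> by auto
  moreover have "det R = (\<Prod>i = 0..<n. R $$ (i,i))"
    using det_upper_triangular[OF ut UV(5)] UV(5) by (simp add: prod_list_diag_prod)
  ultimately have diag: "R $$ (i,i) \<noteq> 0" if "i < n" for i
    using that by auto
  define Rz where "Rz z = mat n n (\<lambda>(i,j). if i = j then exp (z / t * Ln (R $$ (i,i)))
      else if i < j then z / t * R $$ (i,j) else 0)" for z
  have Rz: "Rz z \<in> carrier_mat n n" "upper_triangular (Rz z)" for z
    by (auto simp: Rz_def upper_triangular_def)
  have "det (Rz z) = (\<Prod>i = 0..<n. exp (z / t * Ln (R $$ (i,i))))" for z
    using det_upper_triangular[OF Rz(2) Rz(1)] by (simp add: prod_list_diag_prod Rz_def)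
  then have det_Rz: "det (Rz z) \<noteq> 0" for z by simp
  have hol_Rz: "mat_holomorphic_on n Rz UNIV"
    unfolding Rz_def
    by (intro mat_holomorphic_on_mat holomorphic_on_If_const holomorphic_intros) (use \<open>t \<noteq> 0\<close> in auto)
  have "Rz 0 = 1\<^sub>m n" by (intro eq_matI) (auto simp: Rz_def)
  moreover have "Rz t = R"
    using UV(5) ut diag \<open>t \<noteq> 0\<close> by (intro eq_matI) (auto simp: Rz_def upper_triangular_def)
  ultimately show ?thesis
  proof (intro that[of "\<lambda>z. U * Rz z * V"])
    show "mat_holomorphic_on n (\<lambda>z. U * Rz z * V) UNIV"
      using UV hol_Rz by (intro mat_holomorphic_on_mult mat_holomorphic_on_const)
    show "det (U * Rz z * V) \<noteq> 0" for z
    proof -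
      have "det (U * Rz z * V) = det U * det (Rz z) * det V"
        using det_mult[OF mult_carrier_mat[OF UV(6) Rz(1)] UV(7)] det_mult[OF UV(6) Rz(1)] by simp
      then show ?thesis
        using det_Rz det_nonzero_if_right_inverse[OF UV(6,7,1)]
          det_nonzero_if_right_inverse[OF UV(7,6,2)] by simp
    qed
  qed (use UV in auto)
qed

lemma similar_upper_triangular_in_spectral_ball:
  fixes A T :: "complex mat"
  assumes "0 < n" "A \<in> carrier_mat n n" "similar_mat A T" "T \<in> carrier_mat n n" "upper_triangular T"
    and "\<And>i. i < n \<Longrightarrow> norm (T $$ (i,i)) < 1"
  shows "A \<in> spectral_ball n"
proof -
  have "char_poly A = (\<Prod>a\<leftarrow>diag_mat T. [:- a, 1:])"
    using char_poly_similar[OF assms(3)] char_poly_upper_triangular[OF assms(4,5)] by simp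
  moreover have "norm x < 1" if "x \<in> set (diag_mat T)" for x
    using that assms(4,6) by (auto simp: diag_mat_def)
  ultimately show ?thesis
    using spectral_radius_less_1_if_eigenvalues_in_disc[OF assms(2,1)] assms(2)
    by (simp add: spectral_ball_def)
qed

text \<open>Interpolate the diagonals by the scalar discs of \<open>unit_disc_self_map_through\<close> and the strictly
  upper parts linearly.\<close>
lemma upper_triangular_disc_through:
  fixes T0 T1 :: "complex mat" and t :: real
  assumes "T0 \<in> carrier_mat n n" "upper_triangular T0" "T1 \<in> carrier_mat n n" "upper_triangular T1"
    and "\<And>i. i < n \<Longrightarrow> norm (T0 $$ (i,i)) < 1" "\<And>i. i < n \<Longrightarrow> norm (T1 $$ (i,i)) < 1"
    and "\<And>i. i < n \<Longrightarrow> moebius_dist (T0 $$ (i,i)) (T1 $$ (i,i)) < t" and "0 < t" "t < 1"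
  obtains T where "mat_holomorphic_on n T (ball 0 1)" "\<And>z. upper_triangular (T z)"
    "\<And>z i. z \<in> ball 0 1 \<Longrightarrow> i < n \<Longrightarrow> norm (T z $$ (i,i)) < 1"
    "T 0 = T0" "T (of_real t) = T1"
proof -
  have "\<forall>i<n. \<exists>f. f holomorphic_on ball 0 1 \<and> (\<forall>z\<in>ball 0 1. norm (f z) < 1) \<and>
      f 0 = T0 $$ (i,i) \<and> f (of_real t) = T1 $$ (i,i)"
    using assms(5-7,9) by (blast intro: unit_disc_self_map_through)
  then obtain F where F: "\<And>i. i < n \<Longrightarrow> F i holomorphic_on ball 0 1 \<and> (\<forall>z\<in>ball 0 1. norm (F i z) < 1) \<and>
      F i 0 = T0 $$ (i,i) \<and> F i (of_real t) = T1 $$ (i,i)"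
    by metis
  define T where "T z = mat n n (\<lambda>(i,j). if i = j then F i z
      else if i < j then (1 - z / t) * T0 $$ (i,j) + z / t * T1 $$ (i,j) else 0)" for z
  show ?thesis
  proof (rule that)
    show "mat_holomorphic_on n T (ball 0 1)"
      unfolding T_def using F \<open>0 < t\<close>
      by (intro mat_holomorphic_on_mat holomorphic_on_If_const holomorphic_intros) auto
    show "upper_triangular (T z)" for z
      by (auto simp: T_def upper_triangular_def)
    show "norm (T z $$ (i,i)) < 1" if "z \<in> ball 0 1" "i < n" for z i
      using F that by (simp add: T_def)
    show "T 0 = T0" "T (of_real t) = T1"
      using assms(1-4) F \<open>0 < t\<close> by (auto intro!: eq_matI simp: T_def upper_triangular_def)
  qed
qed

text \<open>Join \<open>P\<^sub>0\<close> to \<open>P\<^sub>1\<close> by the entire path \<open>z \<mapsto> P\<^sub>0 E(z)\<close> of invertible matrices, where \<open>E\<close> runs from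
  \<open>1\<close> to \<open>Q\<^sub>0 P\<^sub>1\<close>, and conjugate \<open>T\<close> along it.\<close>
lemma similarity_disc_through:
  fixes T :: "complex \<Rightarrow> complex mat" and t :: complex
  assumes sim0: "similar_mat_wit A0 T0 P0 Q0" and A0: "A0 \<in> carrier_mat n n"
    and sim1: "similar_mat_wit A1 T1 P1 Q1" and A1: "A1 \<in> carrier_mat n n"
    and hol_T: "mat_holomorphic_on n T S" and "T 0 = T0" "T t = T1" "t \<noteq> 0"
  obtains \<phi> where "mat_holomorphic_on n \<phi> S" "\<And>z. z \<in> S \<Longrightarrow> similar_mat (\<phi> z) (T z)"
    "\<phi> 0 = A0" "\<phi> t = A1"
proof -
  note W0 = similar_mat_witD2[OF A0 sim0] and W1 = similar_mat_witD2[OF A1 sim1]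
  have "det (Q0 * P1) \<noteq> 0"
    using det_nonzero_if_right_inverse[OF W0(7,6,2)] det_nonzero_if_right_inverse[OF W1(6,7,1)]
    by (simp add: det_mult[OF W0(7) W1(6)])
  with \<open>t \<noteq> 0\<close> obtain E where hol_E: "mat_holomorphic_on n E UNIV" and det_E: "\<And>z. det (E z) \<noteq> 0"
    and E0: "E 0 = 1\<^sub>m n" and E1: "E t = Q0 * P1"
    using invertible_mat_entire_path[OF mult_carrier_mat[OF W0(7) W1(6)]] by metis
  define P where "P z = P0 * E z" for z
  define Pinv where "Pinv z = (1 / det (P z)) \<cdot>\<^sub>m adj_mat (P z)" for z
  have hol_P: "mat_holomorphic_on n P UNIV"
    unfolding P_def using W0(6) hol_E by (intro mat_holomorphic_on_mult mat_holomorphic_on_const)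
  note P = mat_holomorphic_onD(1)[OF hol_P UNIV_I]
  have det_P: "det (P z) \<noteq> 0" for z
    using det_nonzero_if_right_inverse[OF W0(6,7,1)] det_E P_def
      det_mult[OF W0(6) mat_holomorphic_onD(1)[OF hol_E UNIV_I]] by simp
  note Pinv = adj_mat_div_det_inverse[OF P det_P, folded Pinv_def]
  have Pinv_carrier: "Pinv z \<in> carrier_mat n n" for z
    using adj_mat(1)[OF P] by (simp add: Pinv_def)
  define \<phi> where "\<phi> z = P z * T z * Pinv z" for z
  show ?thesis
  proof (rule that)
    show "mat_holomorphic_on n \<phi> S"
      unfolding \<phi>_def Pinv_def using hol_T det_P
      by (intro mat_holomorphic_on_mult mat_holomorphic_on_inverse
          mat_holomorphic_on_subset[OF hol_P]) auto
    show "similar_mat (\<phi> z) (T z)" if "z \<in> S" for z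
    proof -
      have T: "T z \<in> carrier_mat n n" using mat_holomorphic_onD(1)[OF hol_T that] .
      then have \<phi>: "\<phi> z \<in> carrier_mat n n" unfolding \<phi>_def using P Pinv_carrier by (intro mult_carrier_mat)
      have "similar_mat_wit (\<phi> z) (T z) (P z) (Pinv z)"
        unfolding similar_mat_wit_def Let_def carrier_matD(1)[OF \<phi>]
        using \<phi> T P Pinv Pinv_carrier by (simp add: \<phi>_def)
      then show ?thesis by (auto simp: similar_mat_def)
    qed
    have "P 0 = P0" using W0(6) E0 by (simp add: P_def)
    moreover have "Pinv 0 = Q0"
      using mat_inverse_unique[OF W0(6) Pinv_carrier W0(7) _ W0(1)] Pinv(2)[of 0] \<open>P 0 = P0\<close> by simp
    ultimately show "\<phi> 0 = A0" using W0(3) \<open>T 0 = T0\<close> by (simp add: \<phi>_def)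
    have "P t = P1"
      using E1 W0(1,6,7) W1(6) by (simp add: P_def assoc_mult_mat[symmetric])
    moreover have "Pinv t = Q1"
      using mat_inverse_unique[OF W1(6) Pinv_carrier W1(7) _ W1(1)] Pinv(2)[of t] \<open>P t = P1\<close> by simp
    ultimately show "\<phi> t = A1" using W1(3) \<open>T t = T1\<close> by (simp add: \<phi>_def)
  qed
qed

lemma spectral_ball_disc_through:
  fixes A B :: "complex mat" and lam nu :: "nat \<Rightarrow> complex" and t :: real
  assumes n: "0 < n" and A: "A \<in> spectral_ball n" and B: "B \<in> spectral_ball n"
    and cpA: "char_poly A = (\<Prod>j<n. [:- lam j, 1:])" and cpB: "char_poly B = (\<Prod>j<n. [:- nu j, 1:])"
    and d: "\<And>j. j < n \<Longrightarrow> moebius_dist (lam j) (nu j) < t" and t: "0 < t" "t < 1"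
  shows "\<exists>\<phi>. holo_mat n \<phi> (ball 0 1) \<and> (\<forall>\<zeta>\<in>ball 0 1. \<phi> \<zeta> \<in> spectral_ball n) \<and>
    \<phi> 0 = A \<and> \<phi> (of_real t) = B"
proof -
  have Ac: "A \<in> carrier_mat n n" and Bc: "B \<in> carrier_mat n n"
    using A B by (auto simp: spectral_ball_def)
  obtain T0 P0 Q0 where sim0: "similar_mat_wit A T0 P0 Q0" and ut0: "upper_triangular T0"
    and diag0: "\<And>i. i < n \<Longrightarrow> T0 $$ (i,i) = lam i"
    using schur_decomposition_diag[OF Ac cpA] by blast
  obtain T1 P1 Q1 where sim1: "similar_mat_wit B T1 P1 Q1" and ut1: "upper_triangular T1"
    and diag1: "\<And>i. i < n \<Longrightarrow> T1 $$ (i,i) = nu i"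
    using schur_decomposition_diag[OF Bc cpB] by blast
  obtain T where hol_T: "mat_holomorphic_on n T (ball 0 1)" and ut: "\<And>z. upper_triangular (T z)"
    and diag: "\<And>z i. z \<in> ball 0 1 \<Longrightarrow> i < n \<Longrightarrow> norm (T z $$ (i,i)) < 1"
    and T_0: "T 0 = T0" and T_t: "T (of_real t) = T1"
    using upper_triangular_disc_through[OF similar_mat_witD2(5)[OF Ac sim0] ut0
        similar_mat_witD2(5)[OF Bc sim1] ut1 _ _ _ t]
      diag0 diag1 d spectral_ball_eigenvalue_in_disc[OF A cpA] spectral_ball_eigenvalue_in_disc[OF B cpB]
    by metis
  have "complex_of_real t \<noteq> 0" using t by simp
  then obtain \<phi> where hol: "mat_holomorphic_on n \<phi> (ball 0 1)"
    and sim: "\<And>z. z \<in> ball 0 1 \<Longrightarrow> similar_mat (\<phi> z) (T z)" and "\<phi> 0 = A" "\<phi> (of_real t) = B"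
    using similarity_disc_through[OF sim0 Ac sim1 Bc hol_T T_0 T_t] by metis
  moreover have "\<phi> z \<in> spectral_ball n" if "z \<in> ball 0 1" for z
    using similar_upper_triangular_in_spectral_ball[OF n mat_holomorphic_onD(1)[OF hol that] sim[OF that]
        mat_holomorphic_onD(1)[OF hol_T that] ut diag[OF that]] .
  ultimately show ?thesis
    using holo_mat_iff_mat_holomorphic_on[of "ball 0 1" \<phi> n] by (auto simp: spectral_ball_def)
qed

lemma lempert_mat_le_if_discs:
  fixes r :: real
  assumes "0 \<le> r" "r < 1"
    and discs: "\<And>t. r < t \<Longrightarrow> t < 1 \<Longrightarrow> \<exists>\<phi>. holo_mat n \<phi> (ball 0 1) \<and> (\<forall>\<zeta>\<in>ball 0 1. \<phi> \<zeta> \<in> D) \<and>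
        \<phi> 0 = A \<and> \<phi> (of_real t) = B"
  shows "lempert_mat n D A B \<le> r"
proof -
  define S where "S = {cmod \<alpha> | \<alpha>. \<exists>\<phi>. holo_mat n \<phi> (ball 0 1) \<and>
      (\<forall>\<zeta>\<in>ball 0 1. \<phi> \<zeta> \<in> D) \<and> \<phi> 0 = A \<and> \<alpha> \<in> ball 0 1 \<and> \<phi> \<alpha> = B}"
  have "bdd_below S" unfolding S_def by (auto intro: bdd_belowI[of _ 0])
  have "Inf S \<le> t" if t: "r < t" "t < 1" for t
  proof -
    obtain \<phi> where "holo_mat n \<phi> (ball 0 1)" "\<forall>\<zeta>\<in>ball 0 1. \<phi> \<zeta> \<in> D" "\<phi> 0 = A" "\<phi> (of_real t) = B"
      using discs[OF t] by blast
    moreover have "cmod (of_real t) = t" "of_real t \<in> ball (0::complex) 1"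
      using t \<open>0 \<le> r\<close> by auto
    ultimately have "t \<in> S"
      unfolding S_def by (intro CollectI exI[of _ "of_real t"] conjI exI[of _ \<phi>]) simp_all
    then show ?thesis using cInf_lower[OF _ \<open>bdd_below S\<close>] by simp
  qed
  then show ?thesis
    unfolding lempert_mat_def S_def[symmetric] using dense_ge_bounded[OF \<open>r < 1\<close>] by simp
qed

text \<open>\<open>\<sigma>\<close> maps analytic discs in \<open>\<Omega>\<^sub>n\<close> to analytic discs in \<open>\<bbbG>\<^sub>n\<close>; the disc \<open>\<psi>\<close> only ensures that
  the infimum defining the right-hand side is over a nonempty set.\<close>
lemma lempert_vec_sigma_map_le_lempert_mat:
  assumes "holo_mat n \<psi> (ball 0 1)" "\<forall>\<zeta>\<in>ball 0 1. \<psi> \<zeta> \<in> spectral_ball n" "\<psi> 0 = A"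
    "\<beta> \<in> ball 0 1" "\<psi> \<beta> = B"
  shows "lempert_vec n (symmetrized_polydisc n) (sigma_map A) (sigma_map B)
    \<le> lempert_mat n (spectral_ball n) A B"
proof -
  define SM where "SM = {cmod \<alpha> | \<alpha>. \<exists>\<phi>. holo_mat n \<phi> (ball 0 1) \<and>
      (\<forall>\<zeta>\<in>ball 0 1. \<phi> \<zeta> \<in> spectral_ball n) \<and> \<phi> 0 = A \<and> \<alpha> \<in> ball 0 1 \<and> \<phi> \<alpha> = B}"
  define SV where "SV = {cmod \<alpha> | \<alpha>. \<exists>\<phi>. holo_vec n \<phi> (ball 0 1) \<and>
      (\<forall>\<zeta>\<in>ball 0 1. \<phi> \<zeta> \<in> symmetrized_polydisc n) \<and> \<phi> 0 = sigma_map A \<and> \<alpha> \<in> ball 0 1 \<and>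
      \<phi> \<alpha> = sigma_map B}"
  have "cmod \<beta> \<in> SM"
    unfolding SM_def using assms by (intro CollectI exI[of _ \<beta>] conjI exI[of _ \<psi>]) simp_all
  moreover have "bdd_below SV" unfolding SV_def by (auto intro: bdd_belowI[of _ 0])
  moreover have "SM \<subseteq> SV"
  proof
    fix x assume "x \<in> SM"
    then obtain \<alpha> \<phi> where "x = cmod \<alpha>" and hol: "holo_mat n \<phi> (ball 0 1)"
      and into: "\<forall>\<zeta>\<in>ball 0 1. \<phi> \<zeta> \<in> spectral_ball n" and "\<phi> 0 = A" "\<alpha> \<in> ball 0 1" "\<phi> \<alpha> = B"
      unfolding SM_def by blast
    moreover have "holo_vec n (\<lambda>\<zeta>. sigma_map (\<phi> \<zeta>)) (ball 0 1)"
      using hol into holo_mat_iff_mat_holomorphic_on[of "ball 0 1" \<phi> n]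
      by (intro holo_vec_sigma_map) (auto simp: spectral_ball_def)
    moreover have "\<forall>\<zeta>\<in>ball 0 1. sigma_map (\<phi> \<zeta>) \<in> symmetrized_polydisc n"
      using into by (simp add: symmetrized_polydisc_def)
    ultimately show "x \<in> SV"
      unfolding SV_def
      by (intro CollectI exI[of _ \<alpha>] conjI exI[of _ "\<lambda>\<zeta>. sigma_map (\<phi> \<zeta>)"]) simp_all
  qed
  ultimately show ?thesis
    unfolding lempert_vec_def lempert_mat_def SM_def[symmetric] SV_def[symmetric]
    by (intro cInf_superset_mono) auto
qed

lemma lempert_bounds_for_matching:
  fixes lam nu :: "nat \<Rightarrow> complex"
  assumes n: "0 < n" and A: "A \<in> spectral_ball n" and B: "B \<in> spectral_ball n"
    and cpA: "char_poly A = (\<Prod>j<n. [:- lam j, 1:])" and cpB: "char_poly B = (\<Prod>j<n. [:- nu j, 1:])"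
  shows "lempert_vec n (symmetrized_polydisc n) (sigma_map A) (sigma_map B)
           \<le> lempert_mat n (spectral_ball n) A B
       \<and> lempert_mat n (spectral_ball n) A B \<le> Max {moebius_dist (lam j) (nu j) | j. j < n}"
    (is "?lower \<and> _ \<le> ?r")
proof -
  have le_r: "moebius_dist (lam j) (nu j) \<le> ?r" if "j < n" for j
    using that by (intro Max_ge) auto
  have "?r \<in> {moebius_dist (lam j) (nu j) | j. j < n}"
    using n by (intro Max_in) auto
  then have "?r < 1"
    using spectral_ball_eigenvalue_in_disc[OF A cpA] spectral_ball_eigenvalue_in_disc[OF B cpB]
      moebius_dist_less_1 by auto
  have "0 \<le> ?r"
    using order_trans[OF _ le_r] n by (simp add: moebius_dist_def)
  have discs: "\<exists>\<phi>. holo_mat n \<phi> (ball 0 1) \<and> (\<forall>\<zeta>\<in>ball 0 1. \<phi> \<zeta> \<in> spectral_ball n) \<and>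
      \<phi> 0 = A \<and> \<phi> (of_real t) = B" if "?r < t" "t < 1" for t
    using that le_r \<open>0 \<le> ?r\<close>
    by (intro spectral_ball_disc_through[OF n A B cpA cpB]) (auto intro: le_less_trans)
  obtain \<phi> where "holo_mat n \<phi> (ball 0 1)" "\<forall>\<zeta>\<in>ball 0 1. \<phi> \<zeta> \<in> spectral_ball n" "\<phi> 0 = A"
    "\<phi> (of_real ((?r + 1) / 2)) = B"
    using discs[of "(?r + 1) / 2"] \<open>?r < 1\<close> by auto
  moreover have "of_real ((?r + 1) / 2) \<in> ball (0::complex) 1"
    using \<open>0 \<le> ?r\<close> \<open>?r < 1\<close> by simp
  ultimately have ?lower
    by (intro lempert_vec_sigma_map_le_lempert_mat)
  moreover have "lempert_mat n (spectral_ball n) A B \<le> ?r"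
    using \<open>0 \<le> ?r\<close> \<open>?r < 1\<close> discs by (rule lempert_mat_le_if_discs)
  ultimately show ?thesis ..
qed

theorem proposition7:
  fixes n :: nat and A B :: "complex mat" and lam mu :: "nat \<Rightarrow> complex"
  assumes "n \<ge> 1"
    and "A \<in> spectral_ball n" and "B \<in> spectral_ball n"
    and "char_poly A = (\<Prod>j<n. [:- lam j, 1:])"
    and "char_poly B = (\<Prod>j<n. [:- mu j, 1:])"
  shows "lempert_vec n (symmetrized_polydisc n) (sigma_map A) (sigma_map B)
           \<le> lempert_mat n (spectral_ball n) A B
       \<and> lempert_mat n (spectral_ball n) A B
           \<le> Min {Max {moebius_dist (lam j) (mu (\<pi> j)) | j. j < n} | \<pi>. \<pi> permutes {..<n}}"
proof -
  have "finite {\<pi>. \<pi> permutes {..<n}}"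
    using finite_permutations by blast
  then have "Min {Max {moebius_dist (lam j) (mu (\<pi> j)) | j. j < n} | \<pi>. \<pi> permutes {..<n}}
      \<in> {Max {moebius_dist (lam j) (mu (\<pi> j)) | j. j < n} | \<pi>. \<pi> permutes {..<n}}"
    by (intro Min_in finite_image_set) (auto intro: permutes_id)
  then obtain \<pi> where \<pi>: "\<pi> permutes {..<n}" and optimal:
    "Min {Max {moebius_dist (lam j) (mu (\<pi> j)) | j. j < n} | \<pi>. \<pi> permutes {..<n}}
      = Max {moebius_dist (lam j) (mu (\<pi> j)) | j. j < n}"
    by blast
  have "char_poly B = (\<Prod>j<n. [:- mu (\<pi> j), 1:])"
    unfolding assms(5) using prod.permute[OF \<pi>, of "\<lambda>j. [:- mu j, 1:]"] by (simp add: o_def)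
  with assms show ?thesis
    unfolding optimal by (intro lempert_bounds_for_matching) auto
qed

end
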